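(* Let $0<\alpha<1$, $\gamma>0$, and let $h$ be a real normalised probability density on $(0,\infty)$ satisfying $$h(x)=\frac{\gamma}{x}\int_0^x\frac{h(u)}{(x-\alpha u)^{\gamma}}\,du,\qquad x\in(0,\infty),$$ with Mellin transform $H(s)=\int_0^\infty x^{s-1}h(x)\,dx$. Let $\sigma=\Re(s)$. Then for $\sigma<1+\gamma$, $$|H(s)|\le (1-\alpha)^{-\gamma}\,\Gamma\!\left(\frac{1+\gamma-\sigma}{\gamma}\right).$$
   Context: $\Gamma$ is the Euler gamma function. *)

theory Defs
  imports "HOL-Analysis.Analysis"
begin

definition mellin_integrand :: "(real \<Rightarrow> real) \<Rightarrow> complex \<Rightarrow> real \<Rightarrow> complex" where
  "mellin_integrand h s x = (complex_of_real x) powr (s - 1) * complex_of_real (h x)"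

definition mellin :: "(real \<Rightarrow> real) \<Rightarrow> complex \<Rightarrow> complex" where
  "mellin h s = (LINT x:{0<..}|lborel. mellin_integrand h s x)"

end

theory Submission
  imports Defs
begin

text \<open>Let \<open>F\<close> be the distribution function of \<open>h\<close>. On the range of integration
  \<open>(1 - \<alpha>) x \<le> x - \<alpha> u \<le> x\<close>, so the fixed-point equation squeezes \<open>h x\<close> between
  \<open>\<gamma> x powr (-\<gamma>-1) F x\<close> and \<open>(1 - \<alpha>) powr -\<gamma>\<close> times that. The lower bound is the
  differential inequality \<open>(ln F)' \<ge> (- x powr -\<gamma>)'\<close>; integrating it up to infinity, where
  \<open>F = 1\<close>, gives \<open>F x \<le> exp (- x powr -\<gamma>)\<close>, the Frechet distribution function. Hence \<open>h\<close>
  is at most \<open>(1 - \<alpha>) powr -\<gamma>\<close> times the Frechet density, whose Mellin transform at real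
  \<open>\<sigma>\<close> is \<open>\<Gamma>((1 + \<gamma> - \<sigma>) / \<gamma>)\<close> by the substitution \<open>t = x powr -\<gamma>\<close>.\<close>

lemma set_integral_nonneg:
  fixes f :: "'a \<Rightarrow> real"
  assumes "\<And>x. x \<in> A \<Longrightarrow> 0 \<le> f x"
  shows "0 \<le> (LINT x:A|M. f x)"
  unfolding set_lebesgue_integral_def
  by (rule Bochner_Integration.integral_nonneg) (use assms in \<open>auto simp: indicator_def\<close>)

lemma set_integral_powr_Ico:
  fixes g x y :: real
  assumes "0 < y" "y \<le> x"
  shows "set_integrable lborel {y..<x} (\<lambda>u. g * u powr (-g-1))"
    and "(LINT u:{y..<x}|lborel. g * u powr (-g-1)) = y powr -g - x powr -g"
proof -
  have cont: "continuous_on {y..x} (\<lambda>u. g * u powr (-g-1))"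
    using assms by (intro continuous_intros) auto
  show "set_integrable lborel {y..<x} (\<lambda>u. g * u powr (-g-1))"
    by (rule set_integrable_subset[OF borel_integrable_atLeastAtMost'[OF cont]]) auto
  have "(LBINT u=y..x. g * u powr (-g-1)) = - (x powr -g) - (- (y powr -g))"
    using assms cont
    by (intro interval_integral_FTC_finite)
       (auto intro!: derivative_eq_intros simp flip: has_real_derivative_iff_has_vector_derivative)
  then show "(LINT u:{y..<x}|lborel. g * u powr (-g-1)) = y powr -g - x powr -g"
    using assms by (simp add: interval_integral_Ico)
qed

text \<open>A discrete Gronwall inequality for \<open>G' \<le> -G\<close>. It assumes no regularity of \<open>G\<close>,
  which matters because it is applied to a distribution function whose density need not be
  continuous.\<close>

lemma exp_bound_from_increments:
  fixes G :: "real \<Rightarrow> real" and a b :: real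
  assumes "a \<le> b"
    and step: "\<And>s t. a \<le> s \<Longrightarrow> s < t \<Longrightarrow> t \<le> b \<Longrightarrow> G t * (t - s) \<le> G s - G t"
  shows "G b * exp (b - a) \<le> G a"
proof (cases "a = b")
  case False
  have "G b * (1 + (b - a) / real N) ^ N \<le> G a" if "N > 0" for N
  proof -
    define \<delta> where "\<delta> = (b - a) / real N"
    have "\<delta> > 0" using \<open>a \<le> b\<close> False that by (simp add: \<delta>_def)
    have "G b * (1 + \<delta>) ^ k \<le> G (b - real k * \<delta>)" if "k \<le> N" for k
      using that
    proof (induction k)
      case (Suc k)
      let ?s = "b - real (Suc k) * \<delta>" and ?t = "b - real k * \<delta>"
      have "real (Suc k) * \<delta> \<le> real N * \<delta>"
        using Suc.prems \<open>\<delta> > 0\<close> by (intro mult_right_mono) auto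
      then have "a \<le> ?s" using \<open>N > 0\<close> by (simp add: \<delta>_def)
      then have "G ?t * \<delta> \<le> G ?s - G ?t"
        using step[of ?s ?t] \<open>\<delta> > 0\<close> by (simp add: algebra_simps)
      moreover have "G b * (1 + \<delta>) ^ k * (1 + \<delta>) \<le> G ?t * (1 + \<delta>)"
        using Suc \<open>\<delta> > 0\<close> by (intro mult_right_mono) auto
      ultimately show ?case by (simp add: algebra_simps)
    qed simp
    from this[of N] show ?thesis using that by (simp add: \<delta>_def)
  qed
  then show ?thesis
    by (intro LIMSEQ_le_const2[OF tendsto_mult[OF tendsto_const tendsto_exp_limit_sequentially]])
       (auto intro: exI[of _ 1])
qed simp

lemma bij_betw_powr:
  fixes a :: real
  assumes "a \<noteq> 0"
  shows "bij_betw (\<lambda>x. x powr a) {0<..} {0<..}"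
  by (rule bij_betw_byWitness[where f' = "\<lambda>y. y powr (1 / a)"]) (use assms in \<open>auto simp: powr_powr\<close>)

definition frechet_density :: "real \<Rightarrow> real \<Rightarrow> real" where
  "frechet_density \<gamma> x = \<gamma> * x powr (-\<gamma>-1) * exp (- (x powr -\<gamma>))"

lemma Gamma_integral_real':
  fixes z :: real
  assumes "0 < z"
  shows "((\<lambda>t. t powr (z - 1) / exp t) has_integral Gamma z) {0<..}"
proof -
  have "((\<lambda>t. if t \<in> {0<..} then t powr (z - 1) / exp t else 0) has_integral Gamma z) {0..}"
    by (rule has_integral_spike[of "{0}", rotated 2, OF Gamma_integral_real[OF assms]]) auto
  then show ?thesis by (subst (asm) has_integral_restrict) auto
qed

lemma mellin_frechet_density:
  fixes \<gamma> \<sigma> :: real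
  assumes "0 < \<gamma>" "\<sigma> < 1 + \<gamma>"
  shows "set_integrable lborel {0<..} (\<lambda>x. x powr (\<sigma> - 1) * frechet_density \<gamma> x)"
    and "(LINT x:{0<..}|lborel. x powr (\<sigma> - 1) * frechet_density \<gamma> x) = Gamma ((1 + \<gamma> - \<sigma>) / \<gamma>)"
proof -
  define z where "z = (1 + \<gamma> - \<sigma>) / \<gamma>"
  have "0 < z" using assms by (simp add: z_def)
  define f where "f t = t powr (z - 1) / exp t" for t :: real
  define g where "g x = x powr -\<gamma>" for x :: real
  define g' where "g' x = -\<gamma> * x powr (-\<gamma>-1)" for x :: real
  let ?M = "\<lambda>x. x powr (\<sigma> - 1) * frechet_density \<gamma> x"
  have f_int: "(f has_integral Gamma z) {0<..}"
    unfolding f_def using \<open>0 < z\<close> by (rule Gamma_integral_real')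
  then have f_abs: "f absolutely_integrable_on {0<..}"
    by (intro nonnegative_absolutely_integrable_1) (auto simp: f_def has_integral_integrable)
  have g_bij: "bij_betw g {0<..} {0<..}"
    unfolding g_def using assms by (intro bij_betw_powr) simp
  have g_deriv: "\<And>x. x \<in> {0<..} \<Longrightarrow> (g has_field_derivative g' x) (at x within {0<..})"
    unfolding g_def g'_def
    by (rule has_field_derivative_at_within[OF has_real_derivative_powr]) auto
  have change_vars: "(\<lambda>x. \<bar>g' x\<bar> * f (g x)) absolutely_integrable_on {0<..} \<and>
      integral {0<..} (\<lambda>x. \<bar>g' x\<bar> * f (g x)) = Gamma z"
    using has_absolute_integral_change_of_variables_1'[OF _ g_deriv bij_betw_imp_inj_on[OF g_bij]]
      bij_betw_imp_surj_on[OF g_bij] f_abs f_int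
    by (simp add: integral_unique)
  have M_eq: "\<bar>g' x\<bar> * f (g x) = ?M x" if "x \<in> {0<..}" for x
  proof -
    have "-\<gamma> * (z - 1) = \<sigma> - 1" using assms by (simp add: z_def field_simps)
    then have "g x powr (z - 1) = x powr (\<sigma> - 1)" by (simp add: g_def powr_powr)
    then show ?thesis using that assms
      by (simp add: f_def g_def g'_def frechet_density_def abs_mult exp_minus field_simps)
  qed
  have "set_integrable lebesgue {0<..} (\<lambda>x. \<bar>g' x\<bar> * f (g x)) =
      set_integrable lebesgue {0<..} ?M"
    by (rule set_integrable_cong) (simp_all add: M_eq)
  with change_vars have M_abs: "?M absolutely_integrable_on {0<..}" by simp
  have "integral {0<..} (\<lambda>x. \<bar>g' x\<bar> * f (g x)) = integral {0<..} ?M"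
    by (rule integral_cong) (simp add: M_eq)
  with change_vars have M_int: "integral {0<..} ?M = Gamma z" by simp
  have "(\<lambda>x. indicator {0<..} x *\<^sub>R ?M x) \<in> borel_measurable lborel"
    unfolding frechet_density_def by measurable
  then show M_lborel: "set_integrable lborel {0<..} ?M"
    using M_abs unfolding set_integrable_def by (simp add: integrable_completion)
  show "(LINT x:{0<..}|lborel. ?M x) = Gamma ((1 + \<gamma> - \<sigma>) / \<gamma>)"
    using set_borel_integral_eq_integral(2)[OF M_lborel] M_int by (simp add: z_def)
qed

lemma set_borel_measurable_mellin_integrand:
  assumes "h \<in> borel_measurable lborel"
  shows "set_borel_measurable lborel {0<..} (mellin_integrand h s)"
proof -
  have eq: "(\<lambda>x. indicator {0<..} x *\<^sub>R mellin_integrand h s x) =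
      (\<lambda>x. indicator {0<..} x *\<^sub>R (exp ((s - 1) * of_real (ln x)) * of_real (h x)))"
    by (auto simp: mellin_integrand_def powr_def Ln_of_real split: split_indicator)
  show ?thesis
    unfolding set_borel_measurable_def eq using assms by measurable
qed

lemma mellin_dominated:
  fixes h g :: "real \<Rightarrow> real" and s :: complex
  assumes h: "h \<in> borel_measurable lborel"
    and bound: "\<And>x. 0 < x \<Longrightarrow> \<bar>h x\<bar> \<le> g x"
    and g: "set_integrable lborel {0<..} (\<lambda>x. x powr (Re s - 1) * g x)"
  shows "set_integrable lborel {0<..} (mellin_integrand h s)"
    and "norm (mellin h s) \<le> (LINT x:{0<..}|lborel. x powr (Re s - 1) * g x)"
proof -
  have le: "norm (mellin_integrand h s x) \<le> x powr (Re s - 1) * g x" if "x \<in> {0<..}" for x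
  proof -
    have "norm (mellin_integrand h s x) = x powr (Re s - 1) * \<bar>h x\<bar>"
      using that by (simp add: mellin_integrand_def norm_mult norm_powr_real_powr)
    then show ?thesis using that bound by (simp add: mult_left_mono)
  qed
  show int: "set_integrable lborel {0<..} (mellin_integrand h s)"
    using le by (intro set_integrable_bound[OF g set_borel_measurable_mellin_integrand[OF h]] AE_I2)
      (auto intro: order.trans[OF _ abs_ge_self])
  have "norm (mellin h s) \<le> (LINT x:{0<..}|lborel. norm (mellin_integrand h s x))"
    unfolding mellin_def by (rule set_integral_norm_bound[OF int])
  also have "\<dots> \<le> (LINT x:{0<..}|lborel. x powr (Re s - 1) * g x)"
    by (rule set_integral_mono[OF set_integrable_norm[OF int] g le])
  finally show "norm (mellin h s) \<le> (LINT x:{0<..}|lborel. x powr (Re s - 1) * g x)" .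
qed

locale fixed_point_density =
  fixes h :: "real \<Rightarrow> real" and \<alpha> \<gamma> :: real
  assumes alpha: "0 \<le> \<alpha>" "\<alpha> < 1"
    and gamma: "0 < \<gamma>"
    and nonneg: "\<And>x. 0 < x \<Longrightarrow> 0 \<le> h x"
    and int_h: "set_integrable lborel {0<..} h"
    and norm_h: "(LINT x:{0<..}|lborel. h x) = 1"
    and eq_int: "\<And>x. 0 < x \<Longrightarrow>
        set_integrable lborel {0<..<x} (\<lambda>u. h u / (x - \<alpha> * u) powr \<gamma>)"
    and eq: "\<And>x. 0 < x \<Longrightarrow>
        h x = \<gamma> / x * (LINT u:{0<..<x}|lborel. h u / (x - \<alpha> * u) powr \<gamma>)"
begin

definition cdf :: "real \<Rightarrow> real" where
  "cdf x = (LINT u:{0<..<x}|lborel. h u)"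

lemma set_integrable_density: "A \<in> sets lborel \<Longrightarrow> A \<subseteq> {0<..} \<Longrightarrow> set_integrable lborel A h"
  using int_h by (rule set_integrable_subset)

lemma cdf_le_1: "cdf x \<le> 1"
proof (cases "x > 0")
  case True
  have "{0<..} = {0<..<x} \<union> {x..}" using True by auto
  then have "1 = (LINT u:{0<..<x} \<union> {x..}|lborel. h u)"
    using norm_h by simp
  also have "\<dots> = cdf x + (LINT u:{x..}|lborel. h u)"
    unfolding cdf_def using True by (intro set_integral_Un set_integrable_density) auto
  moreover have "0 \<le> (LINT u:{x..}|lborel. h u)"
    using True nonneg by (intro set_integral_nonneg) auto
  ultimately show ?thesis by linarith
qed (simp add: cdf_def set_lebesgue_integral_def)

lemma cdf_split:
  assumes "0 < y" "y \<le> x"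
  shows "cdf x = cdf y + (LINT u:{y..<x}|lborel. h u)"
proof -
  have "{0<..<x} = {0<..<y} \<union> {y..<x}" using assms by auto
  then have "cdf x = (LINT u:{0<..<y} \<union> {y..<x}|lborel. h u)"
    unfolding cdf_def by simp
  also have "\<dots> = cdf y + (LINT u:{y..<x}|lborel. h u)"
    unfolding cdf_def using assms by (intro set_integral_Un set_integrable_density) auto
  finally show ?thesis .
qed

lemma cdf_mono: "0 < y \<Longrightarrow> y \<le> x \<Longrightarrow> cdf y \<le> cdf x"
  using cdf_split[of y x] set_integral_nonneg[of "{y..<x}" h] nonneg by fastforce

lemma density_ge_cdf:
  assumes "0 < x"
  shows "\<gamma> * x powr (-\<gamma>-1) * cdf x \<le> h x"
proof -
  have "cdf x / x powr \<gamma> = (LINT u:{0<..<x}|lborel. h u / x powr \<gamma>)"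
    unfolding cdf_def by simp
  also have "\<dots> \<le> (LINT u:{0<..<x}|lborel. h u / (x - \<alpha> * u) powr \<gamma>)"
  proof (rule set_integral_mono)
    fix u assume u: "u \<in> {0<..<x}"
    have "0 < u" "u < x" using u by auto
    moreover have "\<alpha> * u \<le> u"
      using u alpha by (intro mult_left_le_one_le) auto
    moreover have "0 \<le> \<alpha> * u"
      using u alpha by simp
    ultimately have "0 < x - \<alpha> * u" "x - \<alpha> * u \<le> x"
      by linarith+
    then have "(x - \<alpha> * u) powr \<gamma> \<le> x powr \<gamma>"
      using gamma by (intro powr_mono2) auto
    then show "h u / x powr \<gamma> \<le> h u / (x - \<alpha> * u) powr \<gamma>"
      using u nonneg \<open>0 < x - \<alpha> * u\<close> by (intro divide_left_mono) auto
  qed (use assms eq_int in \<open>auto intro!: set_integrable_divide set_integrable_density\<close>)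
  finally have "\<gamma> / x * (cdf x / x powr \<gamma>) \<le> h x"
    using assms gamma by (subst eq[OF assms]) (intro mult_left_mono, auto)
  then show ?thesis
    using assms by (simp add: powr_diff powr_minus field_simps)
qed

lemma density_le_cdf:
  assumes "0 < x"
  shows "h x \<le> (1 - \<alpha>) powr -\<gamma> * (\<gamma> * x powr (-\<gamma>-1) * cdf x)"
proof -
  have "(LINT u:{0<..<x}|lborel. h u / (x - \<alpha> * u) powr \<gamma>)
      \<le> (LINT u:{0<..<x}|lborel. h u / ((1 - \<alpha>) * x) powr \<gamma>)"
  proof (rule set_integral_mono)
    fix u assume u: "u \<in> {0<..<x}"
    have "0 < (1 - \<alpha>) * x" "(1 - \<alpha>) * x \<le> x - \<alpha> * u"
      using u alpha assms by (auto simp: algebra_simps mult_left_mono)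
    moreover from this have "0 < x - \<alpha> * u" by linarith
    ultimately have "((1 - \<alpha>) * x) powr \<gamma> \<le> (x - \<alpha> * u) powr \<gamma>"
      using gamma by (intro powr_mono2) auto
    then show "h u / (x - \<alpha> * u) powr \<gamma> \<le> h u / ((1 - \<alpha>) * x) powr \<gamma>"
      using u nonneg \<open>0 < (1 - \<alpha>) * x\<close> \<open>0 < x - \<alpha> * u\<close>
      by (intro divide_left_mono mult_pos_pos) auto
  qed (use assms eq_int in \<open>auto intro!: set_integrable_divide set_integrable_density\<close>)
  also have "\<dots> = cdf x / ((1 - \<alpha>) * x) powr \<gamma>"
    unfolding cdf_def by simp
  finally have "h x \<le> \<gamma> / x * (cdf x / ((1 - \<alpha>) * x) powr \<gamma>)"
    using assms gamma by (subst eq[OF assms]) (intro mult_left_mono, auto)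
  moreover have "((1 - \<alpha>) * x) powr \<gamma> = (1 - \<alpha>) powr \<gamma> * x powr \<gamma>"
    using assms alpha by (simp add: powr_mult)
  ultimately show ?thesis
    using assms alpha by (simp add: powr_diff powr_minus field_simps)
qed

lemma cdf_increment_ge:
  assumes "0 < y" "y \<le> x"
  shows "cdf y * (y powr -\<gamma> - x powr -\<gamma>) \<le> cdf x - cdf y"
proof -
  note rate = set_integral_powr_Ico[OF assms, of \<gamma>]
  have "cdf y * (y powr -\<gamma> - x powr -\<gamma>) = (LINT u:{y..<x}|lborel. cdf y * (\<gamma> * u powr (-\<gamma>-1)))"
    using rate(2) by simp
  also have "\<dots> \<le> (LINT u:{y..<x}|lborel. h u)"
  proof (rule set_integral_mono)
    fix u assume u: "u \<in> {y..<x}"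
    then have "cdf y * (\<gamma> * u powr (-\<gamma>-1)) \<le> cdf u * (\<gamma> * u powr (-\<gamma>-1))"
      using cdf_mono[OF assms(1)] gamma by (intro mult_right_mono) auto
    also have "\<dots> \<le> h u"
      using u assms density_ge_cdf[of u] by (simp add: mult_ac)
    finally show "cdf y * (\<gamma> * u powr (-\<gamma>-1)) \<le> h u" .
  qed (use rate(1) assms in \<open>auto intro: set_integrable_density set_integrable_mult_right\<close>)
  also have "\<dots> = cdf x - cdf y"
    using cdf_split[OF assms] by simp
  finally show ?thesis .
qed

lemma cdf_growth:
  assumes "0 < y" "y \<le> x"
  shows "cdf y * exp (y powr -\<gamma> - x powr -\<gamma>) \<le> cdf x"
proof -
  let ?G = "\<lambda>v. cdf (v powr (-1/\<gamma>))"
  have inv: "(v powr -\<gamma>) powr (-1/\<gamma>) = v" if "0 < v" for v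
    using that gamma by (simp add: powr_powr)
  have "?G (y powr -\<gamma>) * exp (y powr -\<gamma> - x powr -\<gamma>) \<le> ?G (x powr -\<gamma>)"
  proof (rule exp_bound_from_increments)
    show "x powr -\<gamma> \<le> y powr -\<gamma>"
      using assms gamma by (intro powr_mono2') auto
    fix s t assume st: "x powr -\<gamma> \<le> s" "s < t"
    moreover have "0 < x powr -\<gamma>" using assms by simp
    ultimately have "0 < s" by linarith
    then have "t powr (-1/\<gamma>) < s powr (-1/\<gamma>)"
      using st gamma by (intro powr_less_mono2_neg) auto
    then show "?G t * (t - s) \<le> ?G s - ?G t"
      using cdf_increment_ge[of "t powr (-1/\<gamma>)" "s powr (-1/\<gamma>)"] \<open>0 < s\<close> st gamma
      by (simp add: powr_powr)
  qed
  then show ?thesis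
    using assms inv by simp
qed

lemma cdf_le_frechet:
  assumes "0 < y"
  shows "cdf y \<le> exp (- (y powr -\<gamma>))"
proof -
  have "((\<lambda>x. cdf y * exp (y powr -\<gamma> - x powr -\<gamma>)) \<longlongrightarrow> cdf y * exp (y powr -\<gamma> - 0)) at_top"
    using gamma by (intro tendsto_intros tendsto_neg_powr filterlim_ident) auto
  moreover have "\<forall>\<^sub>F x in at_top. cdf y * exp (y powr -\<gamma> - x powr -\<gamma>) \<le> 1"
    using eventually_ge_at_top[of y]
    by eventually_elim (use assms cdf_growth cdf_le_1 order.trans in blast)
  ultimately have "cdf y * exp (y powr -\<gamma>) \<le> 1"
    by (simp add: tendsto_upperbound)
  then show ?thesis
    by (simp add: exp_minus field_simps)
qed

lemma density_le_frechet:
  assumes "0 < x"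
  shows "h x \<le> (1 - \<alpha>) powr -\<gamma> * frechet_density \<gamma> x"
proof -
  have "h x \<le> (1 - \<alpha>) powr -\<gamma> * (\<gamma> * x powr (-\<gamma>-1) * cdf x)"
    by (rule density_le_cdf[OF assms])
  also have "\<dots> \<le> (1 - \<alpha>) powr -\<gamma> * frechet_density \<gamma> x"
    unfolding frechet_density_def using cdf_le_frechet[OF assms] gamma
    by (intro mult_left_mono) auto
  finally show ?thesis .
qed

end

theorem mainTheorem4:
  fixes h :: "real \<Rightarrow> real" and \<alpha> \<gamma> :: real and s :: complex
  assumes alpha: "0 < \<alpha>" "\<alpha> < 1"
    and gamma: "0 < \<gamma>"
    and meas: "h \<in> borel_measurable lborel"
    and nonneg: "\<And>x. 0 < x \<Longrightarrow> 0 \<le> h x"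
    and int_h: "set_integrable lborel {0<..} h"
    and norm_h: "(LINT x:{0<..}|lborel. h x) = 1"
    and eq_int: "\<And>x. 0 < x \<Longrightarrow>
        set_integrable lborel {0<..<x} (\<lambda>u. h u / (x - \<alpha> * u) powr \<gamma>)"
    and eq: "\<And>x. 0 < x \<Longrightarrow>
        h x = \<gamma> / x * (LINT u:{0<..<x}|lborel. h u / (x - \<alpha> * u) powr \<gamma>)"
    and sigma: "Re s < 1 + \<gamma>"
  shows "set_integrable lborel {0<..} (mellin_integrand h s)
    \<and> norm (mellin h s) \<le> (1 - \<alpha>) powr (- \<gamma>) * Gamma ((1 + \<gamma> - Re s) / \<gamma>)"
proof -
  interpret fixed_point_density h \<alpha> \<gamma>
    using assms by unfold_locales auto
  let ?c = "(1 - \<alpha>) powr -\<gamma>"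
  have bound: "\<bar>h x\<bar> \<le> ?c * frechet_density \<gamma> x" if "0 < x" for x
    using density_le_frechet[OF that] nonneg[OF that] by simp
  have reorder: "(\<lambda>x. x powr (Re s - 1) * (?c * frechet_density \<gamma> x)) =
      (\<lambda>x. ?c * (x powr (Re s - 1) * frechet_density \<gamma> x))"
    by (simp add: mult.left_commute)
  have majorant: "set_integrable lborel {0<..} (\<lambda>x. x powr (Re s - 1) * (?c * frechet_density \<gamma> x))"
    unfolding reorder by (rule set_integrable_mult_right[OF mellin_frechet_density(1)[OF gamma sigma]])
  have "(LINT x:{0<..}|lborel. x powr (Re s - 1) * (?c * frechet_density \<gamma> x))
      = ?c * Gamma ((1 + \<gamma> - Re s) / \<gamma>)"
    unfolding reorder set_integral_mult_right mellin_frechet_density(2)[OF gamma sigma] ..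
  then show ?thesis
    using mellin_dominated[OF meas bound majorant] by simp
qed

end
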